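(* Let $\{\Lambda_{t,t'}\}_{t\ge t'\ge0}$ be completely positive trace-preserving linear maps on operators of $\mathcal H_E$ satisfying $\Lambda_{t,t'}\Lambda_{t',t''}=\Lambda_{t,t''}$ for $t\ge t'\ge t''$ and $\Lambda_{t,t}=\mathrm{id}$. Define the modified quasi-probabilities $\tilde q^{(k)}$ below. Then: (i) $\tilde q^{(k)}$ satisfy the Chapman–Kolmogorov consistency criterion: for $k\ge2$, $1\le l\le k$, $\sum_{\xi_l,\eta_l\in\Omega_{\hat V}}\tilde q^{(k)}(\boldsymbol\xi\boldsymbol\eta\mathbf t)=\tilde q^{(k-1)}$ with the $l$-th triple $(\xi_l,\eta_l,t_l)$ removed, and $\sum_{\xi_1,\eta_1}\tilde q^{(1)}=1$. (ii) If moreover, for all $t\ge t'$, $\Lambda_{t,t'}(|n\rangle\langle n|)\in\mathrm{span}\{|m\rangle\langle m|\}_m$ for every $n$ and $\Lambda_{t,t'}(|n\rangle\langle n'|)\in\mathrm{span}\{|m\rangle\langle m'|: m\ne m'\}$ for every $n\ne n'$, then $\tilde q^{(k)}(\boldsymbol\xi\boldsymbol\eta\mathbf t)=\delta_{\boldsymbol\xi,\boldsymbol\eta}\tilde p^{(k)}(\boldsymbol\xi\mathbf t)$ for all $k$, where $$\tilde p^{(k)}(\boldsymbol\xi\mathbf t)=\Big(\prod_{l=1}^k\sum_{n_l:v_{n_l}=\xi_l}\Big)\langle n_k|\Lambda_{t_k,0}\hat\rho_E|n_k\rangle\prod_{l=1}^{k-1}\langle n_l|\Lambda_{t_l,t_{l+1}}(|n_{l+1}\rangle\langle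 n_{l+1}|)|n_l\rangle\ \ge0,$$ and $\{\tilde p^{(k)}\}_{k\ge1}$ is a consistent family of joint probability distributions (defining a stochastic process with values in $\Omega_{\hat V}$).
   Context: $\mathcal H_E$ finite-dimensional, $\hat V_E=\sum_n v_n|n\rangle\langle n|$ with a fixed orthonormal eigenbasis $\{|n\rangle\}$, $\Omega_{\hat V}$ its set of distinct eigenvalues, $\hat\rho_E$ a density matrix. Modified propagators: $T_{t,t'}(nm|n'm')=\mathrm{tr}_E\big(|m\rangle\langle n|\,\Lambda_{t,t'}(|n'\rangle\langle m'|)\big)$. For $k\ge1$, $t_1>\dots>t_k\ge0$: $$\tilde q^{(k)}(\boldsymbol\xi\boldsymbol\eta\mathbf t)=\Big(\prod_{l=1}^k\sum_{n_l:\,v_{n_l}=\xi_l}\ \sum_{m_l:\,v_{m_l}=\eta_l}\Big)\delta_{n_1,m_1}\langle n_k|\Lambda_{t_k,0}\hat\rho_E|m_k\rangle\prod_{l=1}^{k-1}T_{t_l,t_{l+1}}(n_lm_l|n_{l+1}m_{l+1}).$$ $\delta_{\boldsymbol\xi,\boldsymbol\eta}=\prod_l\delta_{\xi_l,\eta_l}$. *)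

theory Defs
  imports Complex_Main "HOL-Library.Complex_Order" "HOL-Library.FuncSet"
begin

text \<open>Operators on the finite-dimensional space H_E are represented by their matrices
  in the fixed orthonormal eigenbasis of V_E, indexed by a finite type 'n:
  A i j = <i|A|j>.\<close>

type_synonym 'n op = "'n \<Rightarrow> 'n \<Rightarrow> complex"

definition ketbra :: "'n \<Rightarrow> 'n \<Rightarrow> 'n op" where
  "ketbra a b = (\<lambda>i j. if i = a \<and> j = b then 1 else 0)"

definition mmult :: "('n::finite) op \<Rightarrow> 'n op \<Rightarrow> 'n op" where
  "mmult A B = (\<lambda>i j. \<Sum>k\<in>UNIV. A i k * B k j)"

definition tr :: "('n::finite) op \<Rightarrow> complex" where
  "tr A = (\<Sum>i\<in>UNIV. A i i)"

definition psd_on :: "'i set \<Rightarrow> ('i \<Rightarrow> 'i \<Rightarrow> complex) \<Rightarrow> bool" where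
  "psd_on I X \<longleftrightarrow> (\<forall>x :: 'i \<Rightarrow> complex. 0 \<le> (\<Sum>i\<in>I. \<Sum>j\<in>I. cnj (x i) * X i j * x j))"

definition density :: "('n::finite) op \<Rightarrow> bool" where
  "density \<rho> \<longleftrightarrow> psd_on UNIV \<rho> \<and> tr \<rho> = 1"

definition lin_map :: "('n op \<Rightarrow> 'n op) \<Rightarrow> bool" where
  "lin_map L \<longleftrightarrow> (\<forall>a b X Y. L (\<lambda>i j. a * X i j + b * Y i j) = (\<lambda>i j. a * L X i j + b * L Y i j))"

definition trace_pres :: "(('n::finite) op \<Rightarrow> 'n op) \<Rightarrow> bool" where
  "trace_pres L \<longleftrightarrow> (\<forall>X. tr (L X) = tr X)"

text \<open>L \<otimes> id_m acting on operators on H_E \<otimes> C^m (second index component in {..<m}).\<close>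
definition ampl :: "('n op \<Rightarrow> 'n op) \<Rightarrow> (('n \<times> nat) \<Rightarrow> ('n \<times> nat) \<Rightarrow> complex)
    \<Rightarrow> (('n \<times> nat) \<Rightarrow> ('n \<times> nat) \<Rightarrow> complex)" where
  "ampl L X = (\<lambda>(i,a) (j,b). L (\<lambda>i' j'. X (i',a) (j',b)) i j)"

definition compl_pos :: "(('n::finite) op \<Rightarrow> 'n op) \<Rightarrow> bool" where
  "compl_pos L \<longleftrightarrow> (\<forall>(m::nat) X. psd_on (UNIV \<times> {..<m}) X \<longrightarrow> psd_on (UNIV \<times> {..<m}) (ampl L X))"

definition unit_span :: "(('n::finite) \<times> 'n) set \<Rightarrow> 'n op \<Rightarrow> bool" where
  "unit_span S A \<longleftrightarrow> (\<exists>c :: 'n \<times> 'n \<Rightarrow> complex. A = (\<lambda>i j. \<Sum>p\<in>S. c p * ketbra (fst p) (snd p) i j))"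

definition Tprop :: "(real \<Rightarrow> real \<Rightarrow> ('n::finite) op \<Rightarrow> 'n op) \<Rightarrow> real \<Rightarrow> real
    \<Rightarrow> 'n \<Rightarrow> 'n \<Rightarrow> 'n \<Rightarrow> 'n \<Rightarrow> complex" where
  "Tprop \<Lambda> t t' n m n' m' = tr (mmult (ketbra m n) (\<Lambda> t t' (ketbra n' m')))"

text \<open>Lists of length k; list position l (0-based) corresponds to index l+1 of the paper.\<close>
definition times_ok :: "real list \<Rightarrow> bool" where
  "times_ok ts \<longleftrightarrow> sorted_wrt (\<lambda>a b. a > b) ts \<and> (\<forall>t\<in>set ts. 0 \<le> t)"

definition del :: "nat \<Rightarrow> 'a list \<Rightarrow> 'a list" where
  "del l xs = take l xs @ drop (Suc l) xs"

definition qt :: "(real \<Rightarrow> real \<Rightarrow> ('n::finite) op \<Rightarrow> 'n op) \<Rightarrow> 'n op \<Rightarrow> ('n \<Rightarrow> real)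
    \<Rightarrow> real list \<Rightarrow> real list \<Rightarrow> real list \<Rightarrow> complex" where
  "qt \<Lambda> \<rho> v xs ys ts = (let k = length ts in
     \<Sum>ns\<in>PiE {..<k} (\<lambda>l. {n. v n = xs ! l}). \<Sum>ms\<in>PiE {..<k} (\<lambda>l. {m. v m = ys ! l}).
       (if ns 0 = ms 0 then 1 else 0) * \<Lambda> (ts ! (k - 1)) 0 \<rho> (ns (k - 1)) (ms (k - 1))
       * (\<Prod>l<k - 1. Tprop \<Lambda> (ts ! l) (ts ! Suc l) (ns l) (ms l) (ns (Suc l)) (ms (Suc l))))"

definition pt :: "(real \<Rightarrow> real \<Rightarrow> ('n::finite) op \<Rightarrow> 'n op) \<Rightarrow> 'n op \<Rightarrow> ('n \<Rightarrow> real)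
    \<Rightarrow> real list \<Rightarrow> real list \<Rightarrow> complex" where
  "pt \<Lambda> \<rho> v xs ts = (let k = length ts in
     \<Sum>ns\<in>PiE {..<k} (\<lambda>l. {n. v n = xs ! l}).
       \<Lambda> (ts ! (k - 1)) 0 \<rho> (ns (k - 1)) (ns (k - 1))
       * (\<Prod>l<k - 1. \<Lambda> (ts ! l) (ts ! Suc l) (ketbra (ns (Suc l)) (ns (Suc l))) (ns l) (ns l)))"

end

theory Submission
  imports Defs
begin

text \<open>
  With \<open>P\<^sub>x\<close> the spectral projection of \<open>V\<^sub>E\<close> for the eigenvalue \<open>x\<close>, expanding every
  \<open>\<Lambda>\<close> in matrix units shows that \<open>q\<^sup>(\<^sup>k\<^sup>)(\<xi>\<eta>t)\<close> is the trace of the nested operator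
  \<open>P\<^sub>\<xi>\<^sub>1 \<Lambda>\<^sub>t\<^sub>1\<^sub>,\<^sub>t\<^sub>2(P\<^sub>\<xi>\<^sub>2 \<dots> \<Lambda>\<^sub>t\<^sub>k\<^sub>,\<^sub>0(\<rho>) \<dots> P\<^sub>\<eta>\<^sub>2) P\<^sub>\<eta>\<^sub>1\<close>.
  Summing the \<open>l\<close>-th pair of values removes \<open>P\<^sub>\<xi>\<^sub>l \<dots> P\<^sub>\<eta>\<^sub>l\<close>, since \<open>\<Sum>\<^sub>x P\<^sub>x = 1\<close>:
  for \<open>l > 1\<close> the two neighbouring maps then merge by the composition law, and for \<open>l = 1\<close>
  the outermost map disappears under the trace because it is trace preserving.

  If no \<open>\<Lambda>\<close> creates a diagonal entry from a coherence \<open>|n\<rangle>\<langle>n'|\<close>, \<open>n \<noteq> n'\<close>, then in the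
  sum defining \<open>q\<close> every term whose index chains \<open>n\<^sub>l\<close>, \<open>m\<^sub>l\<close> differ anywhere vanishes,
  by induction along the chain starting from \<open>\<delta>\<^sub>n\<^sub>1\<^sub>,\<^sub>m\<^sub>1\<close>. Hence \<open>q = \<delta>\<^sub>\<xi>\<^sub>,\<^sub>\<eta> p\<close>, so \<open>p\<close>
  inherits consistency and normalisation from \<open>q\<close>, and \<open>p \<ge> 0\<close> because its factors are
  diagonal entries of images of positive operators under positive maps.
\<close>

lemma if_zero_mult: "(if P then a else 0) * (x :: 'a::mult_zero) = (if P then a * x else 0)"
  and mult_if_zero: "(x :: 'a::mult_zero) * (if P then a else 0) = (if P then x * a else 0)"
  and sum_if_zero: "(\<Sum>k\<in>S. if P then f k else 0) = (if P then \<Sum>k\<in>S. f k else 0)"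
  and if_conj_zero: "(if P \<and> Q then b else 0) = (if P then if Q then b else 0 else 0)"
  by simp_all

lemmas if_zero_simps = if_zero_mult mult_if_zero sum_if_zero if_conj_zero

lemma sum_swap_outer: "(\<Sum>i\<in>I. \<Sum>a\<in>A. \<Sum>b\<in>B. f i a b) = (\<Sum>a\<in>A. \<Sum>b\<in>B. \<Sum>i\<in>I. f i a b)"
  by (subst sum.swap) (rule sum.cong[OF refl], rule sum.swap)

lemma sum_swap_double:
  "(\<Sum>a\<in>A. \<Sum>b\<in>B. \<Sum>c\<in>C. \<Sum>d\<in>D. f a b c d) = (\<Sum>c\<in>C. \<Sum>d\<in>D. \<Sum>a\<in>A. \<Sum>b\<in>B. f a b c d)"
proof -
  have "(\<Sum>a\<in>A. \<Sum>b\<in>B. \<Sum>c\<in>C. \<Sum>d\<in>D. f a b c d) = (\<Sum>a\<in>A. \<Sum>c\<in>C. \<Sum>b\<in>B. \<Sum>d\<in>D. f a b c d)"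
    by (rule sum.cong[OF refl], rule sum.swap)
  also have "\<dots> = (\<Sum>c\<in>C. \<Sum>a\<in>A. \<Sum>b\<in>B. \<Sum>d\<in>D. f a b c d)"
    by (rule sum.swap)
  also have "\<dots> = (\<Sum>c\<in>C. \<Sum>a\<in>A. \<Sum>d\<in>D. \<Sum>b\<in>B. f a b c d)"
    by (rule sum.cong[OF refl])+ (rule sum.swap)
  also have "\<dots> = (\<Sum>c\<in>C. \<Sum>d\<in>D. \<Sum>a\<in>A. \<Sum>b\<in>B. f a b c d)"
    by (rule sum.cong[OF refl], rule sum.swap)
  finally show ?thesis .
qed

lemma sum_group_by_values:
  fixes g :: "'a::finite \<Rightarrow> 'b::finite \<Rightarrow> 'c::comm_semiring_1"
  assumes "finite Q" "finite R"
  shows "(\<Sum>q\<in>Q. \<Sum>r\<in>R. g (f q) (h r) * w q r)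
    = (\<Sum>a\<in>UNIV. \<Sum>b\<in>UNIV. g a b * (\<Sum>q\<in>Q. \<Sum>r\<in>R. (if f q = a \<and> h r = b then 1 else 0) * w q r))"
proof -
  have "(\<Sum>a\<in>UNIV. \<Sum>b\<in>UNIV. g a b * (\<Sum>q\<in>Q. \<Sum>r\<in>R. (if f q = a \<and> h r = b then 1 else 0) * w q r))
      = (\<Sum>a\<in>UNIV. \<Sum>b\<in>UNIV. \<Sum>q\<in>Q. \<Sum>r\<in>R. (if f q = a \<and> h r = b then 1 else 0) * (g a b * w q r))"
    by (simp add: sum_distrib_left mult_ac)
  also have "\<dots> = (\<Sum>q\<in>Q. \<Sum>r\<in>R. \<Sum>a\<in>UNIV. \<Sum>b\<in>UNIV. (if f q = a \<and> h r = b then 1 else 0) * (g a b * w q r))"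
    by (rule sum_swap_double)
  finally show ?thesis by (simp add: if_zero_simps)
qed

lemma prod_nonneg_complex: "(\<And>a. a \<in> A \<Longrightarrow> (0::complex) \<le> f a) \<Longrightarrow> 0 \<le> prod f A"
  by (induction A rule: infinite_finite_induct) (simp_all add: less_eq_complex_def)

lemma sum_lists_length_Suc:
  "(\<Sum>zs\<in>{zs. set zs \<subseteq> A \<and> length zs = Suc k}. f zs)
     = (\<Sum>xs\<in>{xs. set xs \<subseteq> A \<and> length xs = k}. \<Sum>x\<in>A. f (x # xs))"
  unfolding lists_length_Suc_eq
  by (subst sum.reindex[OF inj_split_Cons]) (simp add: sum.cartesian_product case_prod_unfold)

definition fun_cons :: "'a \<Rightarrow> (nat \<Rightarrow> 'a) \<Rightarrow> nat \<Rightarrow> 'a" where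
  "fun_cons a q = (\<lambda>i. case i of 0 \<Rightarrow> a | Suc j \<Rightarrow> q j)"

lemma fun_cons_simps [simp]: "fun_cons a q 0 = a" "fun_cons a q (Suc j) = q j"
  by (simp_all add: fun_cons_def)

lemma sum_PiE_lessThan_Suc:
  "(\<Sum>p\<in>PiE {..<Suc k} A. f p) = (\<Sum>a\<in>A 0. \<Sum>q\<in>PiE {..<k} (\<lambda>i. A (Suc i)). f (fun_cons a q))"
proof -
  let ?tail = "\<lambda>p j. if j < k then p (Suc j) else undefined"
  have "bij_betw (\<lambda>(a, q). fun_cons a q) (A 0 \<times> PiE {..<k} (\<lambda>i. A (Suc i))) (PiE {..<Suc k} A)"
  proof (rule bij_betwI[where g = "\<lambda>p. (p 0, ?tail p)"])
    show "(\<lambda>(a, q). fun_cons a q) \<in> A 0 \<times> (\<Pi>\<^sub>E i\<in>{..<k}. A (Suc i)) \<rightarrow> (\<Pi>\<^sub>E i\<in>{..<Suc k}. A i)"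
      by (auto simp: PiE_def Pi_def extensional_def fun_cons_def split: nat.splits)
    show "(\<lambda>p. (p 0, ?tail p)) \<in> (\<Pi>\<^sub>E i\<in>{..<Suc k}. A i) \<rightarrow> A 0 \<times> (\<Pi>\<^sub>E i\<in>{..<k}. A (Suc i))"
      by (auto simp: PiE_def Pi_def extensional_def)
  qed (auto simp: PiE_def extensional_def fun_cons_def fun_eq_iff split: nat.splits)
  then show ?thesis
    by (simp add: sum.cartesian_product sum.reindex_bij_betw[symmetric] case_prod_beta)
qed

lemma lin_map_zero: "lin_map L \<Longrightarrow> L (\<lambda>i j. 0) = (\<lambda>i j. 0)"
  unfolding lin_map_def by (drule spec[of _ 0], drule spec[of _ 0]) simp

lemma lin_map_sum:
  assumes "lin_map L" "finite F"
  shows "L (\<lambda>i j. \<Sum>p\<in>F. c p * X p i j) = (\<lambda>i j. \<Sum>p\<in>F. c p * L (X p) i j)"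
  using assms(2)
proof induction
  case empty
  show ?case using lin_map_zero[OF assms(1)] by simp
next
  case (insert a F)
  have "L (\<lambda>i j. \<Sum>p\<in>insert a F. c p * X p i j) = L (\<lambda>i j. c a * X a i j + 1 * (\<Sum>p\<in>F. c p * X p i j))"
    using insert by simp
  also have "\<dots> = (\<lambda>i j. c a * L (X a) i j + 1 * L (\<lambda>i j. \<Sum>p\<in>F. c p * X p i j) i j)"
    by (rule assms(1)[unfolded lin_map_def, rule_format])
  finally show ?case using insert by simp
qed

lemma lin_map_sum_unweighted:
  "lin_map L \<Longrightarrow> finite F \<Longrightarrow> L (\<lambda>i j. \<Sum>p\<in>F. X p i j) = (\<lambda>i j. \<Sum>p\<in>F. L (X p) i j)"
  using lin_map_sum[of L F "\<lambda>_. 1" X] by simp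

lemma op_expand_ketbra:
  "(Y :: ('n::finite) op) = (\<lambda>i j. \<Sum>n\<in>UNIV. \<Sum>m\<in>UNIV. Y n m * ketbra n m i j)"
  by (intro ext) (simp add: ketbra_def if_zero_simps eq_commute[of _ "_::'n"])

lemma lin_map_expand_ketbra:
  assumes "lin_map (L :: ('n::finite) op \<Rightarrow> 'n op)"
  shows "L Y = (\<lambda>i j. \<Sum>n\<in>UNIV. \<Sum>m\<in>UNIV. Y n m * L (ketbra n m) i j)"
proof -
  have "L Y = L (\<lambda>i j. \<Sum>n\<in>UNIV. \<Sum>m\<in>UNIV. Y n m * ketbra n m i j)"
    by (rule arg_cong[where f = L, OF op_expand_ketbra])
  also have "\<dots> = (\<lambda>i j. \<Sum>n\<in>UNIV. L (\<lambda>i j. \<Sum>m\<in>UNIV. Y n m * ketbra n m i j) i j)"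
    by (rule lin_map_sum_unweighted[OF assms]) simp
  also have "\<dots> = (\<lambda>i j. \<Sum>n\<in>UNIV. \<Sum>m\<in>UNIV. Y n m * L (ketbra n m) i j)"
    by (simp add: lin_map_sum[OF assms])
  finally show ?thesis .
qed

lemma Tprop_eq_entry: "Tprop \<Lambda> t t' n m n' m' = \<Lambda> t t' (ketbra n' m') n m"
  by (simp add: Tprop_def tr_def mmult_def ketbra_def if_zero_simps)

lemma del_0_Cons [simp]: "del 0 (x # xs) = xs"
  and del_Suc_Cons [simp]: "del (Suc l) (x # xs) = x # del l xs"
  by (simp_all add: del_def)

lemma length_del [simp]: "l < length xs \<Longrightarrow> length (del l xs) = length xs - 1"
  by (simp add: del_def)

lemma set_del_subset: "set (del l xs) \<subseteq> set xs"
  by (auto simp: del_def dest: in_set_takeD in_set_dropD)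

lemma times_ok_Cons: "times_ok (t # ts) \<longleftrightarrow> (\<forall>s\<in>set ts. s < t) \<and> 0 \<le> t \<and> times_ok ts"
  by (auto simp: times_ok_def)

lemma times_ok_del: "times_ok ts \<Longrightarrow> times_ok (del l ts)"
proof (induction ts arbitrary: l)
  case Nil
  then show ?case by (simp add: del_def times_ok_def)
next
  case (Cons t ts)
  then show ?case
    by (cases l) (auto simp: times_ok_Cons dest: set_del_subset[THEN subsetD])
qed

lemma times_ok_nth_nonneg: "times_ok ts \<Longrightarrow> l < length ts \<Longrightarrow> 0 \<le> ts ! l"
  by (auto simp: times_ok_def)

lemma times_ok_nth_Suc: "times_ok ts \<Longrightarrow> Suc l < length ts \<Longrightarrow> 0 \<le> ts ! Suc l \<and> ts ! Suc l \<le> ts ! l"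
  using sorted_wrt_nth_less[of "\<lambda>a b. a > b" ts l "Suc l"] times_ok_nth_nonneg[of ts "Suc l"]
  by (auto simp: times_ok_def)

section \<open>Quasi-probabilities as traces of nested operators\<close>

text \<open>\<open>spectral_block v x y X\<close> is \<open>P\<^sub>x X P\<^sub>y\<close>, where \<open>P\<^sub>x\<close> projects onto the eigenspace of \<open>V\<^sub>E\<close>
  for the eigenvalue \<open>x\<close>.\<close>
definition spectral_block :: "('n \<Rightarrow> real) \<Rightarrow> real \<Rightarrow> real \<Rightarrow> 'n op \<Rightarrow> 'n op" where
  "spectral_block v x y X = (\<lambda>n m. if v n = x \<and> v m = y then X n m else 0)"

lemma sum_spectral_blocks:
  fixes v :: "'n::finite \<Rightarrow> real"
  shows "(\<Sum>x\<in>range v. \<Sum>y\<in>range v. spectral_block v x y X n m) = X n m"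
  by (simp add: spectral_block_def if_zero_simps)

lemma tr_sum_spectral_blocks:
  fixes v :: "'n::finite \<Rightarrow> real"
  shows "(\<Sum>x\<in>range v. \<Sum>y\<in>range v. tr (spectral_block v x y X)) = tr X"
proof -
  have "(\<Sum>x\<in>range v. \<Sum>y\<in>range v. tr (spectral_block v x y X))
      = (\<Sum>i\<in>UNIV. \<Sum>x\<in>range v. \<Sum>y\<in>range v. spectral_block v x y X i i)"
    unfolding tr_def by (rule sum_swap_outer[symmetric])
  then show ?thesis
    by (simp only: sum_spectral_blocks tr_def)
qed

definition next_time :: "real list \<Rightarrow> real" where
  "next_time ts = (if ts = [] then 0 else hd ts)"

lemma next_time_Cons [simp]: "next_time (t # ts) = t"
  by (simp add: next_time_def)

lemma next_time_del: "0 < l \<Longrightarrow> l < length ts \<Longrightarrow> next_time (del l ts) = next_time ts"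
  by (cases ts; cases l) (auto simp: next_time_def del_def)

lemma times_ok_next_time: "times_ok (t # ts) \<Longrightarrow> 0 \<le> next_time ts \<and> next_time ts \<le> t"
  by (cases ts) (auto simp: times_ok_def next_time_def)

text \<open>\<open>nested_op \<Lambda> \<rho> v xs ys ts\<close> is
  \<open>P\<^sub>x\<^sub>1 \<Lambda>\<^sub>t\<^sub>1\<^sub>,\<^sub>t\<^sub>2(P\<^sub>x\<^sub>2 \<dots> \<Lambda>\<^sub>t\<^sub>k\<^sub>,\<^sub>0(\<rho>) \<dots> P\<^sub>y\<^sub>2) P\<^sub>y\<^sub>1\<close>; \<open>next_time [] = 0\<close> supplies the final time \<open>0\<close>.\<close>
fun nested_op :: "(real \<Rightarrow> real \<Rightarrow> ('n::finite) op \<Rightarrow> 'n op) \<Rightarrow> 'n op \<Rightarrow> ('n \<Rightarrow> real)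
    \<Rightarrow> real list \<Rightarrow> real list \<Rightarrow> real list \<Rightarrow> 'n op" where
  "nested_op \<Lambda> \<rho> v (x # xs) (y # ys) (t # ts)
     = spectral_block v x y (\<Lambda> t (next_time ts) (nested_op \<Lambda> \<rho> v xs ys ts))"
| "nested_op \<Lambda> \<rho> v _ _ _ = \<rho>"

text \<open>The sum defining \<open>qt\<close> with the first indices fixed to \<open>n\<^sub>1 = n\<close>, \<open>m\<^sub>1 = m\<close> and
  \<open>\<Lambda>\<^sub>t\<^sub>k\<^sub>,\<^sub>0 \<rho>\<close> replaced by an arbitrary operator \<open>Z\<close>.\<close>
definition qt_kernel :: "(real \<Rightarrow> real \<Rightarrow> ('n::finite) op \<Rightarrow> 'n op) \<Rightarrow> ('n \<Rightarrow> real)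
    \<Rightarrow> real list \<Rightarrow> real list \<Rightarrow> real list \<Rightarrow> 'n op \<Rightarrow> 'n op" where
  "qt_kernel \<Lambda> v xs ys ts Z n m = (let k = length ts in
     \<Sum>ns\<in>PiE {..<k} (\<lambda>l. {n. v n = xs ! l}). \<Sum>ms\<in>PiE {..<k} (\<lambda>l. {m. v m = ys ! l}).
       (if ns 0 = n \<and> ms 0 = m then 1 else 0) * Z (ns (k - 1)) (ms (k - 1))
       * (\<Prod>l<k - 1. Tprop \<Lambda> (ts ! l) (ts ! Suc l) (ns l) (ms l) (ns (Suc l)) (ms (Suc l))))"

lemma qt_eq_tr_qt_kernel:
  fixes \<Lambda> :: "real \<Rightarrow> real \<Rightarrow> ('n::finite) op \<Rightarrow> 'n op"
  assumes "ts \<noteq> []"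
  shows "qt \<Lambda> \<rho> v xs ys ts = tr (qt_kernel \<Lambda> v xs ys ts (\<Lambda> (last ts) 0 \<rho>))"
proof -
  have last: "ts ! (length ts - 1) = last ts"
    using assms by (simp add: last_conv_nth)
  have diag: "(\<Sum>i\<in>UNIV. (if a = i \<and> b = i then 1 else 0) * r) = (if a = b then 1 else 0) * (r::complex)"
    for a b :: 'n and r
    by (cases "a = b") (simp_all add: if_zero_simps)
  show ?thesis
    unfolding qt_def qt_kernel_def tr_def Let_def last
    by (subst sum_swap_outer) (simp add: mult.assoc diag)
qed

lemma qt_kernel_singleton: "qt_kernel \<Lambda> v [x] [y] [t] Z = spectral_block v x y Z"
proof (intro ext)
  fix n m
  have "qt_kernel \<Lambda> v [x] [y] [t] Z n m
      = (\<Sum>a\<in>{n. v n = x}. \<Sum>b\<in>{m. v m = y}. (if a = n \<and> b = m then 1 else 0) * Z a b)"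
    by (simp add: qt_kernel_def sum_PiE_lessThan_Suc)
  also have "\<dots> = spectral_block v x y Z n m"
    by (simp add: spectral_block_def if_zero_simps)
  finally show "qt_kernel \<Lambda> v [x] [y] [t] Z n m = spectral_block v x y Z n m" .
qed

lemma qt_kernel_Cons:
  fixes \<Lambda> :: "real \<Rightarrow> real \<Rightarrow> ('n::finite) op \<Rightarrow> 'n op"
  assumes "ts \<noteq> []"
  shows "qt_kernel \<Lambda> v (x # xs) (y # ys) (t # ts) Z n m = (if v n = x \<and> v m = y then
    \<Sum>n'\<in>UNIV. \<Sum>m'\<in>UNIV. Tprop \<Lambda> t (hd ts) n m n' m' * qt_kernel \<Lambda> v xs ys ts Z n' m' else 0)"
proof -
  obtain K where K: "length ts = Suc K"
    using assms by (cases ts) auto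
  define A where "A l = {n. v n = xs ! l}" for l
  define B where "B l = {m. v m = ys ! l}" for l
  define R where "R q r = Z (q K) (r K)
    * (\<Prod>l<K. Tprop \<Lambda> (ts ! l) (ts ! Suc l) (q l) (r l) (q (Suc l)) (r (Suc l)))" for q r
  define T where "T = Tprop \<Lambda> t (hd ts)"
  have kernel: "qt_kernel \<Lambda> v xs ys ts Z n' m' = (\<Sum>q\<in>PiE {..<Suc K} A. \<Sum>r\<in>PiE {..<Suc K} B.
      (if q 0 = n' \<and> r 0 = m' then 1 else 0) * R q r)" for n' m'
    unfolding qt_kernel_def R_def A_def B_def K by (simp add: mult.assoc)
  have "qt_kernel \<Lambda> v (x # xs) (y # ys) (t # ts) Z n m
      = (\<Sum>a\<in>{n. v n = x}. \<Sum>q\<in>PiE {..<Suc K} A. \<Sum>b\<in>{m. v m = y}. \<Sum>r\<in>PiE {..<Suc K} B.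
          (if a = n \<and> b = m then 1 else 0) * (T a b (q 0) (r 0) * R q r))"
    unfolding qt_kernel_def
    by (simp only: Let_def length_Cons K sum_PiE_lessThan_Suc diff_Suc_1 prod.lessThan_Suc_shift
        fun_cons_simps) (simp add: R_def A_def B_def T_def hd_conv_nth[OF assms] mult_ac)
  also have "\<dots> = (\<Sum>a\<in>{n. v n = x}. \<Sum>b\<in>{m. v m = y}. (if a = n \<and> b = m then 1 else 0) *
      (\<Sum>q\<in>PiE {..<Suc K} A. \<Sum>r\<in>PiE {..<Suc K} B. T a b (q 0) (r 0) * R q r))"
    by (rule sum.cong[OF refl], subst sum.swap, simp add: sum_distrib_left)
  also have "\<dots> = (if v n = x \<and> v m = y then
      (\<Sum>q\<in>PiE {..<Suc K} A. \<Sum>r\<in>PiE {..<Suc K} B. T n m (q 0) (r 0) * R q r) else 0)"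
    by (simp add: if_zero_simps)
  also have "(\<Sum>q\<in>PiE {..<Suc K} A. \<Sum>r\<in>PiE {..<Suc K} B. T n m (q 0) (r 0) * R q r)
     = (\<Sum>n'\<in>UNIV. \<Sum>m'\<in>UNIV. T n m n' m' * qt_kernel \<Lambda> v xs ys ts Z n' m')"
    unfolding kernel
    by (rule sum_group_by_values[where f = "\<lambda>q. q 0" and h = "\<lambda>r. r 0"]) (simp_all add: finite_PiE)
  finally show ?thesis by (simp add: T_def)
qed

section \<open>Consistency of the quasi-probabilities\<close>

locale evolution_family =
  fixes \<Lambda> :: "real \<Rightarrow> real \<Rightarrow> ('n::finite) op \<Rightarrow> 'n op"
  assumes linear: "0 \<le> t' \<Longrightarrow> t' \<le> t \<Longrightarrow> lin_map (\<Lambda> t t')"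
    and trace_preserving: "0 \<le> t' \<Longrightarrow> t' \<le> t \<Longrightarrow> trace_pres (\<Lambda> t t')"
    and composition: "0 \<le> t'' \<Longrightarrow> t'' \<le> t' \<Longrightarrow> t' \<le> t \<Longrightarrow> \<Lambda> t t' (\<Lambda> t' t'' X) = \<Lambda> t t'' X"
begin

lemma qt_kernel_eq_nested_op:
  "times_ok ts \<Longrightarrow> length xs = length ts \<Longrightarrow> length ys = length ts \<Longrightarrow> ts \<noteq> [] \<Longrightarrow>
    qt_kernel \<Lambda> v xs ys ts (\<Lambda> (last ts) 0 \<rho>) = nested_op \<Lambda> \<rho> v xs ys ts"
proof (induction ts arbitrary: xs ys)
  case Nil
  then show ?case by simp
next
  case (Cons t ts)
  obtain x xs' where xs: "xs = x # xs'" using Cons.prems by (cases xs) auto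
  obtain y ys' where ys: "ys = y # ys'" using Cons.prems by (cases ys) auto
  show ?case
  proof (cases "ts = []")
    case True
    then show ?thesis using Cons.prems
      by (simp add: xs ys qt_kernel_singleton next_time_def)
  next
    case False
    define N where "N = nested_op \<Lambda> \<rho> v xs' ys' ts"
    have IH: "qt_kernel \<Lambda> v xs' ys' ts (\<Lambda> (last ts) 0 \<rho>) = N"
      using Cons.IH[of xs' ys'] Cons.prems False by (simp add: N_def xs ys times_ok_Cons)
    have "0 \<le> hd ts" "hd ts \<le> t"
      using times_ok_next_time[OF Cons.prems(1)] False by (simp_all add: next_time_def)
    then have "\<Lambda> t (hd ts) N n m = (\<Sum>n'\<in>UNIV. \<Sum>m'\<in>UNIV. Tprop \<Lambda> t (hd ts) n m n' m' * N n' m')"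
      for n m by (subst lin_map_expand_ketbra[OF linear]) (simp_all add: Tprop_eq_entry mult.commute)
    then show ?thesis
      using False
      by (simp add: xs ys qt_kernel_Cons spectral_block_def next_time_def flip: N_def) (simp only: IH)
  qed
qed

lemma qt_eq_tr_nested_op:
  "times_ok ts \<Longrightarrow> length xs = length ts \<Longrightarrow> length ys = length ts \<Longrightarrow> ts \<noteq> [] \<Longrightarrow>
    qt \<Lambda> \<rho> v xs ys ts = tr (nested_op \<Lambda> \<rho> v xs ys ts)"
  by (simp add: qt_eq_tr_qt_kernel qt_kernel_eq_nested_op)

lemma nested_op_marginal:
  "times_ok ts \<Longrightarrow> length xs = length ts \<Longrightarrow> length ys = length ts \<Longrightarrow> 0 < l \<Longrightarrow> l < length ts \<Longrightarrow>
    (\<lambda>n m. \<Sum>x\<in>range v. \<Sum>y\<in>range v. nested_op \<Lambda> \<rho> v (xs[l := x]) (ys[l := y]) ts n m)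
      = nested_op \<Lambda> \<rho> v (del l xs) (del l ys) (del l ts)"
proof (induction ts arbitrary: xs ys l)
  case Nil
  then show ?case by simp
next
  case (Cons t ts)
  obtain x0 xs' where xs: "xs = x0 # xs'" using Cons.prems by (cases xs) auto
  obtain y0 ys' where ys: "ys = y0 # ys'" using Cons.prems by (cases ys) auto
  obtain l' where l: "l = Suc l'" using Cons.prems by (cases l) auto
  have next_time: "0 \<le> next_time ts" "next_time ts \<le> t"
    using times_ok_next_time[OF Cons.prems(1)] by simp_all
  define M where "M = (\<lambda>n m. \<Sum>x\<in>range v. \<Sum>y\<in>range v. nested_op \<Lambda> \<rho> v (xs'[l' := x]) (ys'[l' := y]) ts n m)"
  have outer: "(\<lambda>n m. \<Sum>x\<in>range v. \<Sum>y\<in>range v. nested_op \<Lambda> \<rho> v (xs[l := x]) (ys[l := y]) (t # ts) n m)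
     = spectral_block v x0 y0 (\<Lambda> t (next_time ts) M)"
    by (simp add: xs ys l M_def lin_map_sum_unweighted[OF linear[OF next_time]] spectral_block_def
        sum_if_zero)
  show ?case
  proof (cases "l' = 0")
    case True
    obtain t1 ts' where ts: "ts = t1 # ts'" using Cons.prems l True by (cases ts) auto
    obtain x1 xs'' where xs': "xs' = x1 # xs''" using Cons.prems xs ts by (cases xs') auto
    obtain y1 ys'' where ys': "ys' = y1 # ys''" using Cons.prems ys ts by (cases ys') auto
    have "0 \<le> next_time ts'" "next_time ts' \<le> t1" "t1 \<le> t"
      using times_ok_next_time Cons.prems(1) next_time(2) by (auto simp: ts times_ok_Cons)
    then have "\<Lambda> t t1 (\<Lambda> t1 (next_time ts') W) = \<Lambda> t (next_time ts') W" for W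
      by (rule composition)
    moreover have "M = \<Lambda> t1 (next_time ts') (nested_op \<Lambda> \<rho> v xs'' ys'' ts')"
      by (intro ext) (simp add: M_def True xs' ys' ts sum_spectral_blocks)
    ultimately show ?thesis
      using outer by (simp add: True xs ys l xs' ys' ts)
  next
    case False
    have "M = nested_op \<Lambda> \<rho> v (del l' xs') (del l' ys') (del l' ts)"
      unfolding M_def using Cons.IH[of xs' ys' l'] Cons.prems False by (simp add: xs ys l times_ok_Cons)
    moreover have "next_time (del l' ts) = next_time ts"
      using False Cons.prems l by (simp add: next_time_del)
    ultimately show ?thesis
      using outer by (simp add: xs ys l)
  qed
qed

lemma qt_marginal_first:
  assumes "length xs = length ts" "length ys = length ts" "times_ok (t # ts)"
  shows "(\<Sum>x\<in>range v. \<Sum>y\<in>range v. qt \<Lambda> \<rho> v (x # xs) (y # ys) (t # ts))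
    = tr (nested_op \<Lambda> \<rho> v xs ys ts)"
proof -
  have next_time: "0 \<le> next_time ts" "next_time ts \<le> t"
    using times_ok_next_time[OF assms(3)] by simp_all
  have "(\<Sum>x\<in>range v. \<Sum>y\<in>range v. qt \<Lambda> \<rho> v (x # xs) (y # ys) (t # ts))
      = (\<Sum>x\<in>range v. \<Sum>y\<in>range v. tr (spectral_block v x y (\<Lambda> t (next_time ts) (nested_op \<Lambda> \<rho> v xs ys ts))))"
    using assms by (simp add: qt_eq_tr_nested_op)
  also have "\<dots> = tr (\<Lambda> t (next_time ts) (nested_op \<Lambda> \<rho> v xs ys ts))"
    by (rule tr_sum_spectral_blocks)
  also have "\<dots> = tr (nested_op \<Lambda> \<rho> v xs ys ts)"
    using trace_preserving[OF next_time] by (simp add: trace_pres_def)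
  finally show ?thesis .
qed

lemma qt_singleton_sum:
  "0 \<le> t \<Longrightarrow> (\<Sum>x\<in>range v. \<Sum>y\<in>range v. qt \<Lambda> \<rho> v [x] [y] [t]) = tr \<rho>"
  using qt_marginal_first[where xs = "[]" and ys = "[]" and ts = "[]"] by (simp add: times_ok_def)

lemma qt_marginal:
  assumes "2 \<le> length ts" "l < length ts" "length xs = length ts" "length ys = length ts" "times_ok ts"
  shows "(\<Sum>x\<in>range v. \<Sum>y\<in>range v. qt \<Lambda> \<rho> v (xs[l := x]) (ys[l := y]) ts)
    = qt \<Lambda> \<rho> v (del l xs) (del l ys) (del l ts)"
proof (cases "l = 0")
  case True
  obtain t ts' where ts: "ts = t # ts'" using assms by (cases ts) auto
  obtain x0 xs' where xs: "xs = x0 # xs'" using assms by (cases xs) auto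
  obtain y0 ys' where ys: "ys = y0 # ys'" using assms by (cases ys) auto
  have "ts' \<noteq> []" using assms ts by auto
  then show ?thesis
    using assms qt_marginal_first[of xs' ts' ys' t]
    by (simp add: True xs ys ts qt_eq_tr_nested_op times_ok_Cons)
next
  case False
  have "ts \<noteq> []" using assms(1) by auto
  have "(\<Sum>x\<in>range v. \<Sum>y\<in>range v. qt \<Lambda> \<rho> v (xs[l := x]) (ys[l := y]) ts)
      = (\<Sum>x\<in>range v. \<Sum>y\<in>range v. tr (nested_op \<Lambda> \<rho> v (xs[l := x]) (ys[l := y]) ts))"
    using assms \<open>ts \<noteq> []\<close> by (intro sum.cong refl) (simp add: qt_eq_tr_nested_op)
  also have "\<dots> = (\<Sum>i\<in>UNIV. \<Sum>x\<in>range v. \<Sum>y\<in>range v. nested_op \<Lambda> \<rho> v (xs[l := x]) (ys[l := y]) ts i i)"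
    unfolding tr_def by (rule sum_swap_outer[symmetric])
  also have "\<dots> = tr (nested_op \<Lambda> \<rho> v (del l xs) (del l ys) (del l ts))"
    using nested_op_marginal[of ts xs ys l] assms False
    by (simp add: tr_def fun_eq_iff)
  also have "\<dots> = qt \<Lambda> \<rho> v (del l xs) (del l ys) (del l ts)"
    using assms by (subst qt_eq_tr_nested_op) (auto simp: times_ok_del dest: arg_cong[where f = length])
  finally show ?thesis .
qed

end

section \<open>The coherence-free case\<close>

lemma sum_times_lessThan_1: "(\<Sum>p\<in>A \<times> {..<1::nat}. f p) = (\<Sum>a\<in>A. f (a, 0))"
proof -
  have "A \<times> {..<1::nat} = (\<lambda>a. (a, 0)) ` A" by auto
  then show ?thesis by (simp add: sum.reindex inj_on_def)
qed

text \<open>Only the case \<open>m = 1\<close> of complete positivity, i.e.\ positivity, is needed.\<close>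
lemma compl_pos_diag_nonneg:
  fixes L :: "('n::finite) op \<Rightarrow> 'n op"
  assumes cp: "compl_pos L" and X: "psd_on UNIV X"
  shows "0 \<le> L X i i"
proof -
  define Y :: "'n \<times> nat \<Rightarrow> 'n \<times> nat \<Rightarrow> complex" where "Y p q = X (fst p) (fst q)" for p q
  have "psd_on (UNIV \<times> {..<1}) Y"
    unfolding psd_on_def
  proof
    fix x :: "'n \<times> nat \<Rightarrow> complex"
    have "0 \<le> (\<Sum>a\<in>UNIV. \<Sum>c\<in>UNIV. cnj (x (a, 0)) * X a c * x (c, 0))"
      using X unfolding psd_on_def by (drule_tac x = "\<lambda>a. x (a, 0)" in spec) simp
    then show "0 \<le> (\<Sum>p\<in>UNIV \<times> {..<1}. \<Sum>q\<in>UNIV \<times> {..<1}. cnj (x p) * Y p q * x q)"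
      unfolding sum_times_lessThan_1 by (simp add: Y_def)
  qed
  then have "psd_on (UNIV \<times> {..<1}) (ampl L Y)"
    using cp unfolding compl_pos_def by blast
  moreover define e :: "'n \<times> nat \<Rightarrow> complex" where "e p = (if p = (i, 0) then 1 else 0)" for p
  ultimately have "0 \<le> (\<Sum>p\<in>UNIV \<times> {..<1}. \<Sum>q\<in>UNIV \<times> {..<1}. cnj (e p) * ampl L Y p q * e q)"
    unfolding psd_on_def by blast
  also have "\<dots> = (\<Sum>p\<in>UNIV \<times> {..<1}. \<Sum>q\<in>UNIV \<times> {..<1}. e p * ampl L Y p q * e q)"
    by (simp only: e_def if_distrib[of cnj] complex_cnj_one complex_cnj_zero)
  also have "\<dots> = L X i i"
    unfolding sum_times_lessThan_1 by (simp add: e_def if_zero_simps ampl_def Y_def)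
  finally show ?thesis .
qed

lemma psd_ketbra_diag: "psd_on UNIV (ketbra (n::'n::finite) n)"
proof -
  have "(\<Sum>i\<in>UNIV. \<Sum>j\<in>UNIV. cnj (x i) * ketbra n n i j * x j) = x n * cnj (x n)" for x :: "'n \<Rightarrow> complex"
    by (simp add: ketbra_def if_zero_simps mult.commute)
  then show ?thesis
    by (simp add: psd_on_def complex_mult_cnj less_eq_complex_def)
qed

lemma pt_nonneg:
  fixes \<Lambda> :: "real \<Rightarrow> real \<Rightarrow> ('n::finite) op \<Rightarrow> 'n op"
  assumes cp: "\<And>t t'. 0 \<le> t' \<Longrightarrow> t' \<le> t \<Longrightarrow> compl_pos (\<Lambda> t t')"
    and \<rho>: "density \<rho>" and ts: "times_ok ts" "ts \<noteq> []"
  shows "0 \<le> pt \<Lambda> \<rho> v xs ts"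
proof -
  obtain K where K: "length ts = Suc K"
    using ts(2) by (cases ts) auto
  have "0 \<le> \<Lambda> (ts ! K) 0 \<rho> i i" for i
    using compl_pos_diag_nonneg[OF cp] \<rho> times_ok_nth_nonneg[OF ts(1), of K] K
    by (simp add: density_def)
  moreover have "0 \<le> \<Lambda> (ts ! l) (ts ! Suc l) (ketbra n n) i i" if "l < K" for l n i
    using compl_pos_diag_nonneg[OF cp psd_ketbra_diag] times_ok_nth_Suc[OF ts(1), of l] that K
    by simp
  ultimately show ?thesis
    unfolding pt_def Let_def K
    by (intro sum_nonneg mult_nonneg_nonneg prod_nonneg_complex) simp_all
qed

lemma unit_span_offdiag_diag_eq_0:
  assumes "unit_span {(m, m') | m m'. m \<noteq> m'} (A :: ('n::finite) op)"
  shows "A i i = 0"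
proof -
  obtain c where "A = (\<lambda>i j. \<Sum>p\<in>{(m, m') | m m'. m \<noteq> m'}. c p * ketbra (fst p) (snd p) i j)"
    using assms unfolding unit_span_def by blast
  then show ?thesis
    by (auto simp: ketbra_def intro!: sum.neutral)
qed

lemma prod_nonzero_chain_diag:
  fixes T :: "nat \<Rightarrow> 'a \<Rightarrow> 'a \<Rightarrow> 'a \<Rightarrow> 'a \<Rightarrow> 'b::idom"
  assumes "ns 0 = ms 0" "(\<Prod>l<K. T l (ns l) (ms l) (ns (Suc l)) (ms (Suc l))) \<noteq> 0"
    and "\<And>l a b b'. l < K \<Longrightarrow> b \<noteq> b' \<Longrightarrow> T l a a b b' = 0"
  shows "l \<le> K \<Longrightarrow> ns l = ms l"
proof (induction l)
  case 0
  then show ?case using assms(1) by simp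
next
  case (Suc l)
  then have "ns l = ms l" "l < K" by simp_all
  moreover have "T l (ns l) (ms l) (ns (Suc l)) (ms (Suc l)) \<noteq> 0"
    using assms(2) \<open>l < K\<close> by simp
  ultimately show ?case using assms(3) by metis
qed

locale coherence_preserving_family = evolution_family +
  assumes coherence_diag_eq_0: "0 \<le> t' \<Longrightarrow> t' \<le> t \<Longrightarrow> n \<noteq> n' \<Longrightarrow> \<Lambda> t t' (ketbra n n') i i = 0"
begin

lemma qt_diagonal:
  assumes "times_ok ts" "length xs = length ts" "length ys = length ts"
  shows "qt \<Lambda> \<rho> v xs ys ts = (if xs = ys then 1 else 0) * pt \<Lambda> \<rho> v xs ts"
proof -
  define k where "k = length ts"
  define P where "P zs = PiE {..<k} (\<lambda>l. {n. v n = zs ! l})" for zs :: "real list"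
  define F where "F ns ms = (if ns 0 = ms 0 then 1 else 0) * \<Lambda> (ts ! (k - 1)) 0 \<rho> (ns (k - 1)) (ms (k - 1))
    * (\<Prod>l<k - 1. Tprop \<Lambda> (ts ! l) (ts ! Suc l) (ns l) (ms l) (ns (Suc l)) (ms (Suc l)))" for ns ms
  have finite_P: "finite (P zs)" for zs
    by (simp add: P_def finite_PiE)
  have coherence_step: "Tprop \<Lambda> (ts ! l) (ts ! Suc l) a a b b' = 0" if "l < k - 1" "b \<noteq> b'" for l a b b'
    using times_ok_nth_Suc[OF assms(1), of l] that
    by (simp add: k_def Tprop_eq_entry coherence_diag_eq_0)
  have F_offdiag: "F ns ms = 0" if "ns \<in> P xs" "ms \<in> P ys" "ns \<noteq> ms" for ns ms
  proof (rule ccontr)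
    assume "F ns ms \<noteq> 0"
    then have "ns 0 = ms 0" "(\<Prod>l<k - 1. Tprop \<Lambda> (ts ! l) (ts ! Suc l) (ns l) (ms l) (ns (Suc l)) (ms (Suc l))) \<noteq> 0"
      by (auto simp: F_def split: if_splits)
    then have "ns l = ms l" if "l < k" for l
      using prod_nonzero_chain_diag[where T = "\<lambda>l. Tprop \<Lambda> (ts ! l) (ts ! Suc l)", OF _ _ coherence_step] that
      by simp
    then show False
      using that by (auto simp: P_def PiE_iff intro: extensionalityI)
  qed
  have "qt \<Lambda> \<rho> v xs ys ts = (\<Sum>ns\<in>P xs. \<Sum>ms\<in>P ys. F ns ms)"
    unfolding qt_def Let_def F_def P_def k_def ..
  also have "\<dots> = (\<Sum>ns\<in>P xs. if ns \<in> P ys then F ns ns else 0)"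
  proof (rule sum.cong[OF refl])
    fix ns assume "ns \<in> P xs"
    then have "(\<Sum>ms\<in>P ys. F ns ms) = (\<Sum>ms\<in>P ys. if ns = ms then F ns ns else 0)"
      using F_offdiag by (intro sum.cong) auto
    then show "(\<Sum>ms\<in>P ys. F ns ms) = (if ns \<in> P ys then F ns ns else 0)"
      using finite_P by simp
  qed
  also have "\<dots> = (if xs = ys then 1 else 0) * pt \<Lambda> \<rho> v xs ts"
  proof (cases "xs = ys")
    case True
    then show ?thesis
      unfolding pt_def Let_def F_def P_def k_def by (simp add: Tprop_eq_entry)
  next
    case False
    have "P xs \<inter> P ys = {}"
    proof (rule ccontr)
      assume "P xs \<inter> P ys \<noteq> {}"
      then have "xs ! l = ys ! l" if "l < k" for l
        using that by (fastforce simp: P_def PiE_iff)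
      then show False
        using False assms k_def by (auto intro: nth_equalityI)
    qed
    then show ?thesis
      using False by (auto intro!: sum.neutral)
  qed
  finally show ?thesis .
qed

lemma pt_eq_sum_qt:
  assumes "times_ok ts" "length xs = length ts" "l < length ts" "xs ! l \<in> range v"
  shows "pt \<Lambda> \<rho> v xs ts = (\<Sum>y\<in>range v. qt \<Lambda> \<rho> v xs (xs[l := y]) ts)"
proof -
  have "xs = xs[l := y] \<longleftrightarrow> y = xs ! l" for y
    using assms(3) by (metis assms(2) list_update_id nth_list_update_eq)
  then have "(\<Sum>y\<in>range v. qt \<Lambda> \<rho> v xs (xs[l := y]) ts)
      = (\<Sum>y\<in>range v. if y = xs ! l then pt \<Lambda> \<rho> v xs ts else 0)"
    using assms by (intro sum.cong refl) (simp add: qt_diagonal)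
  then show ?thesis
    using assms(4) by simp
qed

lemma pt_marginal:
  assumes "2 \<le> length ts" "l < length ts" "length xs = length ts" "times_ok ts"
  shows "(\<Sum>x\<in>range v. pt \<Lambda> \<rho> v (xs[l := x]) ts) = pt \<Lambda> \<rho> v (del l xs) (del l ts)"
proof -
  have "(\<Sum>x\<in>range v. pt \<Lambda> \<rho> v (xs[l := x]) ts)
      = (\<Sum>x\<in>range v. \<Sum>y\<in>range v. qt \<Lambda> \<rho> v (xs[l := x]) (xs[l := y]) ts)"
    using assms by (intro sum.cong refl) (simp add: pt_eq_sum_qt[of ts _ l])
  also have "\<dots> = qt \<Lambda> \<rho> v (del l xs) (del l xs) (del l ts)"
    using qt_marginal assms by simp
  also have "\<dots> = pt \<Lambda> \<rho> v (del l xs) (del l ts)"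
    using assms by (simp add: qt_diagonal times_ok_del)
  finally show ?thesis .
qed

lemma pt_sum_eq_1:
  assumes "tr \<rho> = 1"
  shows "ts \<noteq> [] \<Longrightarrow> times_ok ts
    \<Longrightarrow> (\<Sum>xs\<in>{xs. set xs \<subseteq> range v \<and> length xs = length ts}. pt \<Lambda> \<rho> v xs ts) = 1"
proof (induction ts)
  case Nil
  then show ?case by simp
next
  case (Cons t ts)
  have sum_lists: "(\<Sum>xs\<in>{xs. set xs \<subseteq> range v \<and> length xs = Suc (length ts)}. pt \<Lambda> \<rho> v xs (t # ts))
    = (\<Sum>xs\<in>{xs. set xs \<subseteq> range v \<and> length xs = length ts}. \<Sum>x\<in>range v. pt \<Lambda> \<rho> v (x # xs) (t # ts))"
    by (rule sum_lists_length_Suc)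
  show ?case
  proof (cases "ts = []")
    case True
    have "(\<Sum>x\<in>range v. pt \<Lambda> \<rho> v [x] [t]) = (\<Sum>x\<in>range v. \<Sum>y\<in>range v. qt \<Lambda> \<rho> v [x] [y] [t])"
      using Cons.prems True by (intro sum.cong refl) (simp add: pt_eq_sum_qt[of _ _ 0])
    also have "\<dots> = 1"
      using Cons.prems True assms by (simp add: qt_singleton_sum times_ok_Cons)
    moreover have "{xs. set xs \<subseteq> range v \<and> length xs = 0} = {[]}"
      by auto
    ultimately show ?thesis
      using sum_lists True by simp
  next
    case False
    have "(\<Sum>x\<in>range v. pt \<Lambda> \<rho> v (x # xs) (t # ts)) = pt \<Lambda> \<rho> v xs ts" if "length xs = length ts" for xs
      using pt_marginal[of "t # ts" 0 "0 # xs"] that False Cons.prems by (cases ts) auto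
    then show ?thesis
      using Cons.IH False Cons.prems by (simp add: sum_lists times_ok_Cons)
  qed
qed

end

theorem mainTheorem5:
  fixes \<Lambda> :: "real \<Rightarrow> real \<Rightarrow> ('n::finite) op \<Rightarrow> 'n op"
    and \<rho> :: "'n op" and v :: "'n \<Rightarrow> real"
  assumes lin: "\<forall>t t'. 0 \<le> t' \<and> t' \<le> t \<longrightarrow> lin_map (\<Lambda> t t')"
    and cp: "\<forall>t t'. 0 \<le> t' \<and> t' \<le> t \<longrightarrow> compl_pos (\<Lambda> t t')"
    and tp: "\<forall>t t'. 0 \<le> t' \<and> t' \<le> t \<longrightarrow> trace_pres (\<Lambda> t t')"
    and semigroup: "\<forall>t t' t''. 0 \<le> t'' \<and> t'' \<le> t' \<and> t' \<le> t \<longrightarrow> \<Lambda> t t' \<circ> \<Lambda> t' t'' = \<Lambda> t t''"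
    and ident: "\<forall>t. 0 \<le> t \<longrightarrow> \<Lambda> t t = id"
    and rho: "density \<rho>"
  shows "(\<forall>k l xs ys ts. 2 \<le> k \<and> l < k \<and> length xs = k \<and> length ys = k \<and> length ts = k
            \<and> set xs \<subseteq> range v \<and> set ys \<subseteq> range v \<and> times_ok ts \<longrightarrow>
            (\<Sum>x\<in>range v. \<Sum>y\<in>range v. qt \<Lambda> \<rho> v (xs[l := x]) (ys[l := y]) ts)
              = qt \<Lambda> \<rho> v (del l xs) (del l ys) (del l ts))
       \<and> (\<forall>t. 0 \<le> t \<longrightarrow> (\<Sum>x\<in>range v. \<Sum>y\<in>range v. qt \<Lambda> \<rho> v [x] [y] [t]) = 1)
       \<and> ((\<forall>t t'. 0 \<le> t' \<and> t' \<le> t \<longrightarrow>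
              (\<forall>n. unit_span {(m, m) | m. True} (\<Lambda> t t' (ketbra n n)))
            \<and> (\<forall>n n'. n \<noteq> n' \<longrightarrow> unit_span {(m, m') | m m'. m \<noteq> m'} (\<Lambda> t t' (ketbra n n'))))
          \<longrightarrow>
            (\<forall>k xs ys ts. 1 \<le> k \<and> length xs = k \<and> length ys = k \<and> length ts = k
               \<and> set xs \<subseteq> range v \<and> set ys \<subseteq> range v \<and> times_ok ts \<longrightarrow>
               qt \<Lambda> \<rho> v xs ys ts = (if xs = ys then 1 else 0) * pt \<Lambda> \<rho> v xs ts
               \<and> 0 \<le> pt \<Lambda> \<rho> v xs ts)
          \<and> (\<forall>k ts. 1 \<le> k \<and> length ts = k \<and> times_ok ts \<longrightarrow>
               (\<Sum>xs\<in>{xs. set xs \<subseteq> range v \<and> length xs = k}. pt \<Lambda> \<rho> v xs ts) = 1)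
          \<and> (\<forall>k l xs ts. 2 \<le> k \<and> l < k \<and> length xs = k \<and> length ts = k
               \<and> set xs \<subseteq> range v \<and> times_ok ts \<longrightarrow>
               (\<Sum>x\<in>range v. pt \<Lambda> \<rho> v (xs[l := x]) ts) = pt \<Lambda> \<rho> v (del l xs) (del l ts)))"
proof -
  have "evolution_family \<Lambda>"
  proof
    fix t t' t'' :: real and X
    assume "0 \<le> t''" "t'' \<le> t'" "t' \<le> t"
    then show "\<Lambda> t t' (\<Lambda> t' t'' X) = \<Lambda> t t'' X"
      using semigroup by (metis comp_apply)
  qed (use lin tp in auto)
  then interpret evolution_family \<Lambda> .
  have coherent: "coherence_preserving_family \<Lambda>"
    if "\<forall>t t'. 0 \<le> t' \<and> t' \<le> t \<longrightarrow> (\<forall>n n'. n \<noteq> n' \<longrightarrow>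
      unit_span {(m, m') | m m'. m \<noteq> m'} (\<Lambda> t t' (ketbra n n')))"
    by unfold_locales (use that in \<open>auto intro: unit_span_offdiag_diag_eq_0\<close>)
  have "tr \<rho> = 1"
    using rho by (simp add: density_def)
  show ?thesis
    apply (intro conjI allI impI)
    subgoal by (auto intro: qt_marginal)
    subgoal using qt_singleton_sum \<open>tr \<rho> = 1\<close> by simp
    subgoal using coherence_preserving_family.qt_diagonal[OF coherent] by auto
    subgoal by (intro pt_nonneg) (use cp rho in auto)
    subgoal using coherence_preserving_family.pt_sum_eq_1[OF coherent] \<open>tr \<rho> = 1\<close> by (auto simp: Suc_le_eq)
    subgoal using coherence_preserving_family.pt_marginal[OF coherent] by auto
    done
qed

end
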